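(* Let $V$ be a vertex algebra, $I$ an ideal of $V$, and $M$ a subspace of $V$ with $I\subseteq M$. Then $M$ is an $MZ_{0,-1}$-subspace of $V$ if and only if $M/I$ is an $MZ_{0,-1}$-subspace of the quotient vertex algebra $V/I$.
   Context: Vertex algebras are over $\mathbb{C}$; for $u\in V$ write $Y(u,z)=\sum_{n\in\mathbb{Z}}u_nz^{-n-1}$ with $u_n\in\operatorname{End}V$. An ideal of $V$ is a subspace $I$ with $v_nw\in I$ and $w_nv\in I$ for all $v\in V$, $w\in I$, $n\in\mathbb{Z}$. Iterated products are nested to the right: $v_{n_1}\cdots v_{n_t}v=v_{n_1}(\cdots(v_{n_t}v))$. For a subspace $M\subseteq V$: $r_{0,-1}(M)$ is the set of $v\in V$ for which there is $m\ge 0$ with $v_{n_1}\cdots v_{n_t}v\in M$ for all $t\ge m$ and all $n_1,\dots,n_t\in\{0,-1\}$. $lsr_{0,-1}(M)$ is the set of $v\in V$ such that for every $b\in V$ there is $m\ge0$ with $b_sv_{n_1}\cdots v_{n_t}v\in M$ for all $t\ge m$ and all $s,n_1,\dots,n_t\in\{0,-1\}$. $rsr_{0,-1}(M)$ is the set of $v\in V$ such that for every $w\in V$ there is $m\ge 0$ with $(v_{n_1}\cdots v_{n_t}v)_nw\in M$ for all $t\ge m$ and all $n,n_1,\dots,n_t\in\{0,-1\}$. $sr_{0,-1}(M)=lsr_{0,-1}(M)\cap rsr_{0,-1}(M)$. $M$ is an $MZ_{0,-1}$-subspace of $V$ if $r_{0,-1}(M)=sr_{0,-1}(M)$. *)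

theory Defs
  imports Complex_Main
begin

record 'a vert_alg =
  carrier :: "'a set"
  vzero :: 'a
  vadd :: "'a \<Rightarrow> 'a \<Rightarrow> 'a"
  vsmult :: "complex \<Rightarrow> 'a \<Rightarrow> 'a"
  vac :: 'a
  nprod :: "'a \<Rightarrow> int \<Rightarrow> 'a \<Rightarrow> 'a"

primrec vsum :: "('a, 'b) vert_alg_scheme \<Rightarrow> (nat \<Rightarrow> 'a) \<Rightarrow> nat \<Rightarrow> 'a" where
  "vsum A f 0 = vzero A"
| "vsum A f (Suc N) = vadd A (vsum A f N) (f N)"

definition complex_vs :: "('a, 'b) vert_alg_scheme \<Rightarrow> bool" where
  "complex_vs A \<longleftrightarrow>
     vzero A \<in> carrier A \<and>
     (\<forall>x\<in>carrier A. \<forall>y\<in>carrier A. vadd A x y \<in> carrier A) \<and>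
     (\<forall>c. \<forall>x\<in>carrier A. vsmult A c x \<in> carrier A) \<and>
     (\<forall>x\<in>carrier A. \<forall>y\<in>carrier A. \<forall>z\<in>carrier A. vadd A (vadd A x y) z = vadd A x (vadd A y z)) \<and>
     (\<forall>x\<in>carrier A. \<forall>y\<in>carrier A. vadd A x y = vadd A y x) \<and>
     (\<forall>x\<in>carrier A. vadd A (vzero A) x = x) \<and>
     (\<forall>x\<in>carrier A. \<exists>y\<in>carrier A. vadd A x y = vzero A) \<and>
     (\<forall>a. \<forall>x\<in>carrier A. \<forall>y\<in>carrier A. vsmult A a (vadd A x y) = vadd A (vsmult A a x) (vsmult A a y)) \<and>
     (\<forall>a b. \<forall>x\<in>carrier A. vsmult A (a + b) x = vadd A (vsmult A a x) (vsmult A b x)) \<and>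
     (\<forall>a b. \<forall>x\<in>carrier A. vsmult A (a * b) x = vsmult A a (vsmult A b x)) \<and>
     (\<forall>x\<in>carrier A. vsmult A 1 x = x)"

text \<open>The Borcherds identity
  sum_{i>=0} binom(m,i) (u_{k+i} v)_{m+n-i} w
   = sum_{i>=0} (-1)^i binom(k,i) (u_{m+k-i} v_{n+i} w - (-1)^k v_{n+k-i} u_{m+i} w)
has only finitely many nonzero terms by truncation; we require that the partial sums
up to N agree for all sufficiently large N.\<close>

definition vertex_algebra :: "('a, 'b) vert_alg_scheme \<Rightarrow> bool" where
  "vertex_algebra A \<longleftrightarrow>
     complex_vs A \<and>
     vac A \<in> carrier A \<and>
     (\<forall>u\<in>carrier A. \<forall>n. \<forall>v\<in>carrier A. nprod A u n v \<in> carrier A) \<and>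
     (\<forall>u\<in>carrier A. \<forall>u'\<in>carrier A. \<forall>n. \<forall>v\<in>carrier A.
        nprod A (vadd A u u') n v = vadd A (nprod A u n v) (nprod A u' n v)) \<and>
     (\<forall>c. \<forall>u\<in>carrier A. \<forall>n. \<forall>v\<in>carrier A.
        nprod A (vsmult A c u) n v = vsmult A c (nprod A u n v)) \<and>
     (\<forall>u\<in>carrier A. \<forall>n. \<forall>v\<in>carrier A. \<forall>v'\<in>carrier A.
        nprod A u n (vadd A v v') = vadd A (nprod A u n v) (nprod A u n v')) \<and>
     (\<forall>c. \<forall>u\<in>carrier A. \<forall>n. \<forall>v\<in>carrier A.
        nprod A u n (vsmult A c v) = vsmult A c (nprod A u n v)) \<and>
     (\<forall>u\<in>carrier A. \<forall>v\<in>carrier A. \<exists>N. \<forall>n\<ge>N. nprod A u n v = vzero A) \<and>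
     (\<forall>v\<in>carrier A. \<forall>n. nprod A (vac A) n v = (if n = -1 then v else vzero A)) \<and>
     (\<forall>u\<in>carrier A. nprod A u (-1) (vac A) = u) \<and>
     (\<forall>u\<in>carrier A. \<forall>n\<ge>0. nprod A u n (vac A) = vzero A) \<and>
     (\<forall>u\<in>carrier A. \<forall>v\<in>carrier A. \<forall>w\<in>carrier A. \<forall>m n k :: int.
        \<forall>\<^sub>F N in sequentially.
          vsum A (\<lambda>i. vsmult A ((of_int m :: complex) gchoose i)
                     (nprod A (nprod A u (k + int i) v) (m + n - int i) w)) N
          = vsum A (\<lambda>i. vsmult A ((-1) ^ i * ((of_int k :: complex) gchoose i))
                     (vadd A (nprod A u (m + k - int i) (nprod A v (n + int i) w))
                        (vsmult A (- ((-1) powi k))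
                           (nprod A v (n + k - int i) (nprod A u (m + int i) w))))) N)"

definition subspace_va :: "('a, 'b) vert_alg_scheme \<Rightarrow> 'a set \<Rightarrow> bool" where
  "subspace_va A M \<longleftrightarrow> M \<subseteq> carrier A \<and> vzero A \<in> M \<and>
     (\<forall>x\<in>M. \<forall>y\<in>M. vadd A x y \<in> M) \<and> (\<forall>c. \<forall>x\<in>M. vsmult A c x \<in> M)"

definition ideal_va :: "('a, 'b) vert_alg_scheme \<Rightarrow> 'a set \<Rightarrow> bool" where
  "ideal_va A I \<longleftrightarrow> subspace_va A I \<and>
     (\<forall>v\<in>carrier A. \<forall>w\<in>I. \<forall>n. nprod A v n w \<in> I \<and> nprod A w n v \<in> I)"

definition coset :: "('a, 'b) vert_alg_scheme \<Rightarrow> 'a set \<Rightarrow> 'a \<Rightarrow> 'a set" where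
  "coset A I x = {vadd A x i | i. i \<in> I}"

definition rep :: "'a set \<Rightarrow> 'a" where
  "rep X = (SOME x. x \<in> X)"

definition quotient_va :: "('a, 'b) vert_alg_scheme \<Rightarrow> 'a set \<Rightarrow> 'a set vert_alg" where
  "quotient_va A I =
     \<lparr> carrier = coset A I ` carrier A,
       vzero = coset A I (vzero A),
       vadd = (\<lambda>X Y. coset A I (vadd A (rep X) (rep Y))),
       vsmult = (\<lambda>c X. coset A I (vsmult A c (rep X))),
       vac = coset A I (vac A),
       nprod = (\<lambda>X n Y. coset A I (nprod A (rep X) n (rep Y))) \<rparr>"

definition quotient_sub :: "('a, 'b) vert_alg_scheme \<Rightarrow> 'a set \<Rightarrow> 'a set \<Rightarrow> 'a set set" where
  "quotient_sub A I M = coset A I ` M"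

fun iter_prod :: "('a, 'b) vert_alg_scheme \<Rightarrow> 'a \<Rightarrow> int list \<Rightarrow> 'a" where
  "iter_prod A v [] = v"
| "iter_prod A v (n # ns) = nprod A v n (iter_prod A v ns)"

definition r01 :: "('a, 'b) vert_alg_scheme \<Rightarrow> 'a set \<Rightarrow> 'a set" where
  "r01 A M = {v \<in> carrier A. \<exists>m::nat. \<forall>ns. length ns \<ge> m \<and> set ns \<subseteq> {0, -1}
                 \<longrightarrow> iter_prod A v ns \<in> M}"

definition lsr01 :: "('a, 'b) vert_alg_scheme \<Rightarrow> 'a set \<Rightarrow> 'a set" where
  "lsr01 A M = {v \<in> carrier A. \<forall>b\<in>carrier A. \<exists>m::nat. \<forall>s ns.
                 s \<in> {0, -1} \<and> length ns \<ge> m \<and> set ns \<subseteq> {0, -1}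
                 \<longrightarrow> nprod A b s (iter_prod A v ns) \<in> M}"

definition rsr01 :: "('a, 'b) vert_alg_scheme \<Rightarrow> 'a set \<Rightarrow> 'a set" where
  "rsr01 A M = {v \<in> carrier A. \<forall>w\<in>carrier A. \<exists>m::nat. \<forall>n ns.
                 n \<in> {0, -1} \<and> length ns \<ge> m \<and> set ns \<subseteq> {0, -1}
                 \<longrightarrow> nprod A (iter_prod A v ns) n w \<in> M}"

definition sr01 :: "('a, 'b) vert_alg_scheme \<Rightarrow> 'a set \<Rightarrow> 'a set" where
  "sr01 A M = lsr01 A M \<inter> rsr01 A M"

definition MZ01_subspace :: "('a, 'b) vert_alg_scheme \<Rightarrow> 'a set \<Rightarrow> bool" where
  "MZ01_subspace A M \<longleftrightarrow> subspace_va A M \<and> r01 A M = sr01 A M"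

end

theory Submission
  imports Defs
begin

text \<open>Since I is an ideal, the products of V descend to cosets, (v + I)_n (w + I) = v_n w + I,
  so iterated products in V/I are the cosets of the iterated products in V.  As M contains I,
  it is a union of cosets, so an element of V lies in M exactly when its coset lies in M/I.
  Hence r, lsr and rsr of M are the full preimages of the corresponding sets of M/I under the
  surjection v \<mapsto> v + I, and r = sr holds for M iff it holds for M/I.\<close>

lemma eq_iff_eq_of_mem_image_iff:
  assumes "A \<subseteq> C" "B \<subseteq> C" "A' \<subseteq> f ` C" "B' \<subseteq> f ` C"
    and "\<And>x. x \<in> C \<Longrightarrow> f x \<in> A' \<longleftrightarrow> x \<in> A"
    and "\<And>x. x \<in> C \<Longrightarrow> f x \<in> B' \<longleftrightarrow> x \<in> B"
  shows "A = B \<longleftrightarrow> A' = B'"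
proof
  have "A = C \<inter> f -` A'" "B = C \<inter> f -` B'" "f ` A = A'" "f ` B = B'"
    using assms by auto
  then show "A = B \<Longrightarrow> A' = B'" "A' = B' \<Longrightarrow> A = B" by simp_all
qed

locale quotient_space =
  fixes V :: "('a, 'b) vert_alg_scheme" and I :: "'a set"
  assumes complex_vs: "complex_vs V" and subspace: "subspace_va V I"
begin

lemma
  shows vzero_closed: "vzero V \<in> carrier V"
    and vadd_closed: "x \<in> carrier V \<Longrightarrow> y \<in> carrier V \<Longrightarrow> vadd V x y \<in> carrier V"
    and vsmult_closed: "x \<in> carrier V \<Longrightarrow> vsmult V c x \<in> carrier V"
    and vadd_assoc: "x \<in> carrier V \<Longrightarrow> y \<in> carrier V \<Longrightarrow> z \<in> carrier V \<Longrightarrow>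
      vadd V (vadd V x y) z = vadd V x (vadd V y z)"
    and vadd_comm: "x \<in> carrier V \<Longrightarrow> y \<in> carrier V \<Longrightarrow> vadd V x y = vadd V y x"
    and vadd_zero_left: "x \<in> carrier V \<Longrightarrow> vadd V (vzero V) x = x"
    and vadd_inverse_ex: "x \<in> carrier V \<Longrightarrow> \<exists>y\<in>carrier V. vadd V x y = vzero V"
    and vsmult_add_distrib: "x \<in> carrier V \<Longrightarrow>
      vsmult V (a + b) x = vadd V (vsmult V a x) (vsmult V b x)"
    and vsmult_one: "x \<in> carrier V \<Longrightarrow> vsmult V 1 x = x"
  using complex_vs unfolding complex_vs_def by - (elim conjE; meson)+

lemma vadd_zero_right: "x \<in> carrier V \<Longrightarrow> vadd V x (vzero V) = x"
  using vadd_zero_left vadd_comm vzero_closed by metis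

lemma
  shows subspace_subset: "I \<subseteq> carrier V"
    and subspace_zero: "vzero V \<in> I"
    and subspace_vadd: "x \<in> I \<Longrightarrow> y \<in> I \<Longrightarrow> vadd V x y \<in> I"
    and subspace_vsmult: "x \<in> I \<Longrightarrow> vsmult V c x \<in> I"
  using subspace unfolding subspace_va_def by simp_all

lemma vsmult_zero_left:
  assumes x: "x \<in> carrier V"
  shows "vsmult V 0 x = vzero V"
proof -
  define z where "z = vsmult V 0 x"
  have z: "z \<in> carrier V" using vsmult_closed x z_def by blast
  have zz: "vadd V z z = z" using vsmult_add_distrib[OF x, of 0 0] z_def by simp
  obtain w where w: "w \<in> carrier V" "vadd V z w = vzero V" using vadd_inverse_ex z by blast
  have "vzero V = vadd V (vadd V z z) w" using zz w by simp
  also have "\<dots> = z" using vadd_assoc z w vadd_zero_right by simp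
  finally show ?thesis using z_def by simp
qed

lemma vadd_vsmult_minus_one:
  assumes x: "x \<in> carrier V"
  shows "vadd V x (vsmult V (-1) x) = vzero V"
proof -
  have "vadd V x (vsmult V (-1) x) = vsmult V (1 + -1) x"
    using vsmult_add_distrib[OF x, of 1 "-1"] vsmult_one x by simp
  then show ?thesis using vsmult_zero_left x by simp
qed

lemma mem_coset_self: "x \<in> carrier V \<Longrightarrow> x \<in> coset V I x"
  unfolding coset_def using vadd_zero_right subspace_zero by force

lemma coset_eq_if_mem:
  assumes x: "x \<in> carrier V" and y: "y \<in> coset V I x"
  shows "coset V I y = coset V I x"
proof
  obtain i where i: "i \<in> I" "y = vadd V x i" using y unfolding coset_def by blast
  have i_carrier: "i \<in> carrier V" using i subspace_subset by blast
  show "coset V I y \<subseteq> coset V I x"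
  proof
    fix z assume "z \<in> coset V I y"
    then obtain j where j: "j \<in> I" "z = vadd V y j" unfolding coset_def by blast
    then have "z = vadd V x (vadd V i j)" using i vadd_assoc x i_carrier subspace_subset by blast
    then show "z \<in> coset V I x" unfolding coset_def using subspace_vadd i j by blast
  qed
  show "coset V I x \<subseteq> coset V I y"
  proof
    fix z assume "z \<in> coset V I x"
    then obtain k where k: "k \<in> I" "z = vadd V x k" unfolding coset_def by blast
    \<comment> \<open>The additive inverse of i must be taken inside I, hence as (-1) \<cdot> i.\<close>
    define i' where "i' = vsmult V (-1) i"
    have i': "i' \<in> I" "i' \<in> carrier V"
      using subspace_vsmult vsmult_closed i i_carrier i'_def by blast+
    have k_carrier: "k \<in> carrier V" using k subspace_subset by blast
    have "vadd V y (vadd V i' k) = vadd V x (vadd V (vadd V i i') k)"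
      using i vadd_assoc vadd_closed x i_carrier i' k_carrier by simp
    also have "\<dots> = z"
      using vadd_vsmult_minus_one[OF i_carrier] vadd_zero_left k k_carrier i'_def by simp
    finally show "z \<in> coset V I y" unfolding coset_def using subspace_vadd i' k by blast
  qed
qed

lemma rep_coset_mem: "x \<in> carrier V \<Longrightarrow> rep (coset V I x) \<in> coset V I x"
  unfolding rep_def using mem_coset_self by (metis someI)

lemma carrier_quotient_va: "carrier (quotient_va V I) = coset V I ` carrier V"
  unfolding quotient_va_def by simp

context
  fixes M :: "'a set"
  assumes M: "subspace_va V M" and I_subset_M: "I \<subseteq> M"
begin

lemma coset_subset_if_mem: "m \<in> M \<Longrightarrow> coset V I m \<subseteq> M"
  using M I_subset_M unfolding subspace_va_def coset_def by auto

lemma coset_mem_quotient_sub_iff: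
  assumes z: "z \<in> carrier V"
  shows "coset V I z \<in> quotient_sub V I M \<longleftrightarrow> z \<in> M"
proof
  assume "coset V I z \<in> quotient_sub V I M"
  then obtain m where "m \<in> M" "coset V I z = coset V I m"
    unfolding quotient_sub_def by blast
  then show "z \<in> M" using coset_subset_if_mem mem_coset_self z by blast
qed (simp add: quotient_sub_def)

lemma subspace_quotient_sub: "subspace_va (quotient_va V I) (quotient_sub V I M)"
proof -
  have M_carrier: "M \<subseteq> carrier V" using M unfolding subspace_va_def by blast
  have rep_mem: "rep X \<in> M" if X: "X \<in> quotient_sub V I M" for X
  proof -
    obtain x where x: "x \<in> M" "X = coset V I x"
      using X unfolding quotient_sub_def by blast
    then show ?thesis using rep_coset_mem coset_subset_if_mem M_carrier by blast
  qed
  show ?thesis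
    using M M_carrier rep_mem unfolding subspace_va_def
    by (auto simp: quotient_sub_def quotient_va_def)
qed

end

end

locale quotient_vertex_algebra =
  fixes V :: "('a, 'b) vert_alg_scheme" and I :: "'a set"
  assumes vertex_algebra: "vertex_algebra V" and ideal: "ideal_va V I"
begin

sublocale quotient_space V I
  using vertex_algebra ideal
  by unfold_locales (simp_all add: vertex_algebra_def ideal_va_def)

lemma
  shows nprod_closed: "u \<in> carrier V \<Longrightarrow> v \<in> carrier V \<Longrightarrow> nprod V u n v \<in> carrier V"
    and nprod_add_left: "u \<in> carrier V \<Longrightarrow> u' \<in> carrier V \<Longrightarrow> v \<in> carrier V \<Longrightarrow>
      nprod V (vadd V u u') n v = vadd V (nprod V u n v) (nprod V u' n v)"
    and nprod_add_right: "u \<in> carrier V \<Longrightarrow> v \<in> carrier V \<Longrightarrow> v' \<in> carrier V \<Longrightarrow>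
      nprod V u n (vadd V v v') = vadd V (nprod V u n v) (nprod V u n v')"
  using vertex_algebra unfolding vertex_algebra_def by simp_all

lemma
  shows ideal_nprod_right: "v \<in> carrier V \<Longrightarrow> w \<in> I \<Longrightarrow> nprod V v n w \<in> I"
    and ideal_nprod_left: "v \<in> carrier V \<Longrightarrow> w \<in> I \<Longrightarrow> nprod V w n v \<in> I"
  using ideal unfolding ideal_va_def by simp_all

lemma nprod_mem_coset:
  assumes x: "x \<in> carrier V" and y: "y \<in> carrier V"
    and x': "x' \<in> coset V I x" and y': "y' \<in> coset V I y"
  shows "nprod V x' n y' \<in> coset V I (nprod V x n y)"
proof -
  obtain i where i: "i \<in> I" "x' = vadd V x i" using x' unfolding coset_def by blast
  obtain j where j: "j \<in> I" "y' = vadd V y j" using y' unfolding coset_def by blast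
  have i_carrier: "i \<in> carrier V" and j_carrier: "j \<in> carrier V"
    using i j subspace_subset by auto
  have y'_carrier: "y' \<in> carrier V" using j vadd_closed y j_carrier by simp
  have "nprod V x' n y' = vadd V (nprod V x n y') (nprod V i n y')"
    using nprod_add_left i x i_carrier y'_carrier by simp
  also have "nprod V x n y' = vadd V (nprod V x n y) (nprod V x n j)"
    using nprod_add_right j x y j_carrier by simp
  finally have "nprod V x' n y'
      = vadd V (nprod V x n y) (vadd V (nprod V x n j) (nprod V i n y'))"
    using vadd_assoc nprod_closed x y j_carrier i_carrier y'_carrier by simp
  moreover have "vadd V (nprod V x n j) (nprod V i n y') \<in> I"
    using subspace_vadd ideal_nprod_right ideal_nprod_left x j i y'_carrier by blast
  ultimately show ?thesis unfolding coset_def by blast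
qed

lemma quotient_nprod_coset:
  assumes "x \<in> carrier V" "y \<in> carrier V"
  shows "nprod (quotient_va V I) (coset V I x) n (coset V I y) = coset V I (nprod V x n y)"
proof -
  have "nprod V (rep (coset V I x)) n (rep (coset V I y)) \<in> coset V I (nprod V x n y)"
    using nprod_mem_coset rep_coset_mem assms by blast
  then have "coset V I (nprod V (rep (coset V I x)) n (rep (coset V I y)))
      = coset V I (nprod V x n y)"
    using coset_eq_if_mem nprod_closed assms by blast
  then show ?thesis unfolding quotient_va_def by simp
qed

lemma iter_prod_closed: "v \<in> carrier V \<Longrightarrow> iter_prod V v ns \<in> carrier V"
  by (induction ns) (simp_all add: nprod_closed)

lemma quotient_iter_prod_coset:
  "v \<in> carrier V \<Longrightarrow>
    iter_prod (quotient_va V I) (coset V I v) ns = coset V I (iter_prod V v ns)"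
  by (induction ns) (simp_all add: quotient_nprod_coset iter_prod_closed)

context
  fixes M :: "'a set"
  assumes M: "subspace_va V M" and I_subset_M: "I \<subseteq> M"
begin

lemma coset_mem_r01_iff:
  "v \<in> carrier V \<Longrightarrow>
    coset V I v \<in> r01 (quotient_va V I) (quotient_sub V I M) \<longleftrightarrow> v \<in> r01 V M"
  unfolding r01_def carrier_quotient_va
  using quotient_iter_prod_coset iter_prod_closed coset_mem_quotient_sub_iff[OF M I_subset_M]
  by auto

lemma coset_mem_lsr01_iff:
  "v \<in> carrier V \<Longrightarrow>
    coset V I v \<in> lsr01 (quotient_va V I) (quotient_sub V I M) \<longleftrightarrow> v \<in> lsr01 V M"
  unfolding lsr01_def carrier_quotient_va
  using quotient_iter_prod_coset quotient_nprod_coset iter_prod_closed nprod_closed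
    coset_mem_quotient_sub_iff[OF M I_subset_M]
  by auto

lemma coset_mem_rsr01_iff:
  "v \<in> carrier V \<Longrightarrow>
    coset V I v \<in> rsr01 (quotient_va V I) (quotient_sub V I M) \<longleftrightarrow> v \<in> rsr01 V M"
  unfolding rsr01_def carrier_quotient_va
  using quotient_iter_prod_coset quotient_nprod_coset iter_prod_closed nprod_closed
    coset_mem_quotient_sub_iff[OF M I_subset_M]
  by auto

lemma coset_mem_sr01_iff:
  "v \<in> carrier V \<Longrightarrow>
    coset V I v \<in> sr01 (quotient_va V I) (quotient_sub V I M) \<longleftrightarrow> v \<in> sr01 V M"
  unfolding sr01_def using coset_mem_lsr01_iff coset_mem_rsr01_iff by blast

end

end

theorem mainTheorem8:
  fixes V :: "'a vert_alg" and I M :: "'a set"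
  assumes "vertex_algebra V"
    and "ideal_va V I"
    and "subspace_va V M"
    and "I \<subseteq> M"
  shows "MZ01_subspace V M \<longleftrightarrow> MZ01_subspace (quotient_va V I) (quotient_sub V I M)"
proof -
  interpret quotient_vertex_algebra V I using assms(1,2) by unfold_locales
  let ?Q = "quotient_va V I" and ?M = "quotient_sub V I M"
  have carriers: "r01 V M \<subseteq> carrier V" "sr01 V M \<subseteq> carrier V"
    "r01 ?Q ?M \<subseteq> coset V I ` carrier V" "sr01 ?Q ?M \<subseteq> coset V I ` carrier V"
    unfolding r01_def sr01_def lsr01_def carrier_quotient_va by auto
  have "r01 V M = sr01 V M \<longleftrightarrow> r01 ?Q ?M = sr01 ?Q ?M"
    using eq_iff_eq_of_mem_image_iff[OF carriers
        coset_mem_r01_iff[OF assms(3,4)] coset_mem_sr01_iff[OF assms(3,4)]] .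
  then show ?thesis
    unfolding MZ01_subspace_def using subspace_quotient_sub assms(3,4) by blast
qed

end
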